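(* Let $k$ be any field and $d$ a positive integer. Then $d\,S_{d+1}(x_1,\ldots,x_{d+1})\in R_1^{(d)}$.
   Context: $X=\{x_1,x_2,\ldots\}$ is a countably infinite set and $k_0\langle X\rangle$ is the free associative $k$-algebra (without identity) on $X$. A $T$-space is a $k$-linear subspace closed under every algebra endomorphism of $k_0\langle X\rangle$; the $T$-space generated by a subset is the smallest $T$-space containing it. $S_d(v_1,\ldots,v_d)=\sum_{\sigma\in\Sigma_d}\prod_{i=1}^d v_{\sigma(i)}$, and $R_1^{(d)}$ is the $T$-space generated by $S_d(x_1,\ldots,x_d)$. *)

theory Defs
  imports "HOL-Combinatorics.Permutations"
begin

text \<open>The free associative algebra without identity over the field 'k on variables
  x_0, x_1, ... (indexed by nat): elements are finitely supported coefficient functions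
  on words (nat lists) with zero coefficient on the empty word.\<close>

definition FA :: "(nat list \<Rightarrow> 'k::field) set" where
  "FA = {p. finite {w. p w \<noteq> 0} \<and> p [] = 0}"

definition padd :: "(nat list \<Rightarrow> 'k::field) \<Rightarrow> (nat list \<Rightarrow> 'k) \<Rightarrow> nat list \<Rightarrow> 'k" where
  "padd p q = (\<lambda>w. p w + q w)"

definition psmult :: "'k::field \<Rightarrow> (nat list \<Rightarrow> 'k) \<Rightarrow> nat list \<Rightarrow> 'k" where
  "psmult c p = (\<lambda>w. c * p w)"

definition pmult :: "(nat list \<Rightarrow> 'k::field) \<Rightarrow> (nat list \<Rightarrow> 'k) \<Rightarrow> nat list \<Rightarrow> 'k" where
  "pmult p q = (\<lambda>w. \<Sum>i\<le>length w. p (take i w) * q (drop i w))"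

fun mprod :: "(nat list \<Rightarrow> 'k::field) list \<Rightarrow> nat list \<Rightarrow> 'k" where
  "mprod [] = (\<lambda>_. 0)"
| "mprod [p] = p"
| "mprod (p # ps) = pmult p (mprod ps)"

definition Xv :: "nat \<Rightarrow> nat list \<Rightarrow> 'k::field" where
  "Xv i = (\<lambda>w. if w = [i] then 1 else 0)"

definition alg_endo :: "((nat list \<Rightarrow> 'k::field) \<Rightarrow> (nat list \<Rightarrow> 'k)) \<Rightarrow> bool" where
  "alg_endo \<phi> \<longleftrightarrow>
     (\<forall>p\<in>FA. \<phi> p \<in> FA) \<and>
     (\<forall>p\<in>FA. \<forall>q\<in>FA. \<phi> (padd p q) = padd (\<phi> p) (\<phi> q)) \<and>
     (\<forall>c. \<forall>p\<in>FA. \<phi> (psmult c p) = psmult c (\<phi> p)) \<and>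
     (\<forall>p\<in>FA. \<forall>q\<in>FA. \<phi> (pmult p q) = pmult (\<phi> p) (\<phi> q))"

definition tspace :: "(nat list \<Rightarrow> 'k::field) set \<Rightarrow> bool" where
  "tspace V \<longleftrightarrow>
     V \<subseteq> FA \<and> (\<lambda>_. 0) \<in> V \<and>
     (\<forall>p\<in>V. \<forall>q\<in>V. padd p q \<in> V) \<and>
     (\<forall>c. \<forall>p\<in>V. psmult c p \<in> V) \<and>
     (\<forall>\<phi>. alg_endo \<phi> \<longrightarrow> (\<forall>p\<in>V. \<phi> p \<in> V))"

definition tspace_gen :: "(nat list \<Rightarrow> 'k::field) set \<Rightarrow> (nat list \<Rightarrow> 'k) set" where
  "tspace_gen S = \<Inter>{V. tspace V \<and> S \<subseteq> V}"

text \<open>S_d(v_1,...,v_d) = sum over permutations sigma of the product v_sigma(1) ... v_sigma(d);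
  here the arguments are indexed 0..d-1.\<close>
definition symS :: "nat \<Rightarrow> (nat \<Rightarrow> nat list \<Rightarrow> 'k::field) \<Rightarrow> nat list \<Rightarrow> 'k" where
  "symS d v = (\<lambda>w. \<Sum>\<sigma>\<in>{\<sigma>. \<sigma> permutes {0..<d}}. mprod (map (\<lambda>i. v (\<sigma> i)) [0..<d]) w)"

end

theory Submission
  imports Defs "HOL-Combinatorics.Multiset_Permutations" "HOL-Library.Sublist"
begin

text \<open>
  Fix a letter c of {0..<d}, an ordered pair a \<noteq> b of letters of {0..<d+1} and a bijection f from
  the other d - 1 letters of {0..<d} onto the other d - 1 letters of {0..<d+1}. The substitution
  x_c \<mapsto> x_a x_b, x_i \<mapsto> x_(f i) is an algebra endomorphism; it maps the permutation words of
  {0..<d}, which make up S_d, bijectively onto the permutation words of {0..<d+1} in which a is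
  immediately followed by b. Summing these images over all ordered pairs a \<noteq> b counts every
  permutation word of length d + 1 once for each of its d adjacent pairs, so the sum is d S_(d+1),
  a sum of endomorphic images of S_d.
\<close>

definition supp :: "(nat list \<Rightarrow> 'k::field) \<Rightarrow> nat list set" where
  "supp p = {w. p w \<noteq> 0}"

lemma finite_supp_FA: "p \<in> FA \<Longrightarrow> finite (supp p)"
  by (simp add: FA_def supp_def)

definition word_subst :: "(nat \<Rightarrow> nat list) \<Rightarrow> nat list \<Rightarrow> nat list" where
  "word_subst s u = concat (map s u)"

lemma word_subst_append [simp]: "word_subst s (u @ v) = word_subst s u @ word_subst s v"
  by (simp add: word_subst_def)

lemma word_subst_Cons [simp]: "word_subst s (x # u) = s x @ word_subst s u"
  by (simp add: word_subst_def)

lemma word_subst_eq_Nil_iff: "\<forall>i. s i \<noteq> [] \<Longrightarrow> word_subst s u = [] \<longleftrightarrow> u = []"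
  by (cases u) (auto simp: word_subst_def)

definition poly_subst :: "(nat \<Rightarrow> nat list) \<Rightarrow> (nat list \<Rightarrow> 'k::field) \<Rightarrow> nat list \<Rightarrow> 'k" where
  "poly_subst s p = (\<lambda>w. \<Sum>u\<in>{u. p u \<noteq> 0 \<and> word_subst s u = w}. p u)"

lemma poly_subst_eq_sum:
  assumes "finite U" "supp p \<subseteq> U"
  shows "poly_subst s p w = (\<Sum>u\<in>U. if word_subst s u = w then p u else 0)"
proof -
  have "(\<Sum>u\<in>U. if word_subst s u = w then p u else 0) = (\<Sum>u\<in>{u\<in>U. word_subst s u = w}. p u)"
    by (simp add: sum.inter_filter assms)
  also have "\<dots> = poly_subst s p w"
    unfolding poly_subst_def
    by (rule sum.mono_neutral_right) (use assms in \<open>auto simp: supp_def\<close>)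
  finally show ?thesis ..
qed

lemma supp_poly_subst: "supp (poly_subst s p) \<subseteq> word_subst s ` supp p"
proof
  fix w assume "w \<in> supp (poly_subst s p)"
  then have "(\<Sum>u\<in>{u. p u \<noteq> 0 \<and> word_subst s u = w}. p u) \<noteq> 0"
    by (simp add: supp_def poly_subst_def)
  then obtain u where "u \<in> {u. p u \<noteq> 0 \<and> word_subst s u = w}"
    by (rule sum.not_neutral_contains_not_neutral)
  then show "w \<in> word_subst s ` supp p" by (auto simp: supp_def)
qed

lemma pmult_eq_sum:
  assumes "finite A" "finite B" "supp p \<subseteq> A" "supp q \<subseteq> B"
  shows "pmult p q w = (\<Sum>x\<in>A \<times> B. if fst x @ snd x = w then p (fst x) * q (snd x) else 0)"
proof -
  let ?split = "\<lambda>i. (take i w, drop i w)"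
  have inj: "inj_on ?split {..length w}"
    by (auto simp: inj_on_def) (metis length_take min.absorb2)
  have splits: "?split ` {..length w} = {x. fst x @ snd x = w}"
  proof (intro subset_antisym subsetI)
    fix x assume "x \<in> {x. fst x @ snd x = w}"
    then have "x = ?split (length (fst x))" "length (fst x) \<le> length w"
      by (auto simp: prod_eq_iff)
    then show "x \<in> ?split ` {..length w}" by blast
  qed auto
  have "pmult p q w = (\<Sum>x\<in>{x. fst x @ snd x = w}. p (fst x) * q (snd x))"
    unfolding pmult_def splits[symmetric] by (simp add: sum.reindex[OF inj])
  also have "\<dots> = (\<Sum>x\<in>{x. fst x @ snd x = w} \<inter> (A \<times> B). p (fst x) * q (snd x))"
    by (rule sum.mono_neutral_right)
       (use assms splits[symmetric] in \<open>auto simp: supp_def\<close>)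
  also have "\<dots> = (\<Sum>x\<in>A \<times> B. if fst x @ snd x = w then p (fst x) * q (snd x) else 0)"
    by (simp add: sum.inter_filter assms Int_commute Int_def)
  finally show ?thesis .
qed

lemma supp_pmult:
  assumes "p \<in> FA" "q \<in> FA"
  shows "supp (pmult p q) \<subseteq> (\<lambda>x. fst x @ snd x) ` (supp p \<times> supp q)"
proof
  fix w assume "w \<in> supp (pmult p q)"
  moreover have "pmult p q w =
      (\<Sum>x\<in>supp p \<times> supp q. if fst x @ snd x = w then p (fst x) * q (snd x) else 0)"
    using assms by (simp add: pmult_eq_sum finite_supp_FA)
  ultimately have "(\<Sum>x\<in>supp p \<times> supp q. if fst x @ snd x = w then p (fst x) * q (snd x) else 0) \<noteq> 0"
    by (simp add: supp_def)
  then obtain x where "x \<in> supp p \<times> supp q"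
      "(if fst x @ snd x = w then p (fst x) * q (snd x) else 0) \<noteq> 0"
    by (rule sum.not_neutral_contains_not_neutral)
  then show "w \<in> (\<lambda>x. fst x @ snd x) ` (supp p \<times> supp q)" by (auto split: if_splits)
qed

lemma sum_over_fibres:
  assumes "finite A" "finite M" "g ` A \<subseteq> M"
  shows "(\<Sum>x\<in>M. if P x then (\<Sum>y\<in>A. if g y = x then f y else 0) else 0) =
         (\<Sum>y\<in>A. if P (g y) then f y else 0)"
proof -
  have "(\<Sum>y\<in>A. if P (g y) then f y else 0) =
        (\<Sum>x\<in>M. \<Sum>y\<in>{y. y \<in> A \<and> g y = x}. if P (g y) then f y else 0)"
    by (rule sum.group[OF assms, symmetric])
  also have "\<dots> = (\<Sum>x\<in>M. if P x then (\<Sum>y\<in>A. if g y = x then f y else 0) else 0)"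
  proof (intro sum.cong refl)
    fix x
    show "(\<Sum>y\<in>{y. y \<in> A \<and> g y = x}. if P (g y) then f y else 0) =
          (if P x then (\<Sum>y\<in>A. if g y = x then f y else 0) else 0)"
      by (cases "P x") (auto simp: sum.inter_filter[OF assms(1)] intro: sum.cong)
  qed
  finally show ?thesis ..
qed

lemma poly_subst_in_FA:
  assumes "\<forall>i. s i \<noteq> []" "p \<in> FA"
  shows "poly_subst s p \<in> FA"
proof -
  have "finite (supp (poly_subst s p))"
    using finite_supp_FA[OF assms(2)] supp_poly_subst by (rule finite_surj)
  moreover have "{u. p u \<noteq> 0 \<and> word_subst s u = []} = {}"
    using assms by (auto simp: FA_def word_subst_eq_Nil_iff)
  then have "poly_subst s p [] = 0"
    unfolding poly_subst_def by (simp only: sum.empty)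
  ultimately show ?thesis by (simp add: FA_def supp_def)
qed

lemma poly_subst_padd:
  assumes "p \<in> FA" "q \<in> FA"
  shows "poly_subst s (padd p q) = padd (poly_subst s p) (poly_subst s q)"
proof
  fix w
  let ?U = "supp p \<union> supp q"
  have U: "finite ?U" using assms by (simp add: finite_supp_FA)
  have "poly_subst s (padd p q) w = (\<Sum>u\<in>?U. if word_subst s u = w then padd p q u else 0)"
    by (rule poly_subst_eq_sum[OF U]) (auto simp: supp_def padd_def)
  also have "\<dots> = padd (poly_subst s p) (poly_subst s q) w"
    by (simp add: padd_def poly_subst_eq_sum[of ?U p, OF U] poly_subst_eq_sum[of ?U q, OF U]
        sum.distrib[symmetric] if_distrib cong: if_cong)
  finally show "poly_subst s (padd p q) w = padd (poly_subst s p) (poly_subst s q) w" .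
qed

lemma poly_subst_psmult:
  assumes "p \<in> FA"
  shows "poly_subst s (psmult c p) = psmult c (poly_subst s p)"
proof
  fix w
  have U: "finite (supp p)" using assms by (rule finite_supp_FA)
  have "poly_subst s (psmult c p) w = (\<Sum>u\<in>supp p. if word_subst s u = w then psmult c p u else 0)"
    by (rule poly_subst_eq_sum[OF U]) (auto simp: supp_def psmult_def)
  also have "\<dots> = psmult c (poly_subst s p) w"
    by (simp add: psmult_def poly_subst_eq_sum[OF U] sum_distrib_left if_distrib cong: if_cong)
  finally show "poly_subst s (psmult c p) w = psmult c (poly_subst s p) w" .
qed

lemma poly_subst_mult_poly_subst:
  assumes "finite A" "finite B" "supp p \<subseteq> A" "supp q \<subseteq> B"
  shows "poly_subst s p z1 * poly_subst s q z2 =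
    (\<Sum>y\<in>A \<times> B. if (word_subst s (fst y), word_subst s (snd y)) = (z1, z2)
                   then p (fst y) * q (snd y) else 0)"
proof -
  have "poly_subst s p z1 * poly_subst s q z2 =
      (\<Sum>y\<in>A \<times> B. (if word_subst s (fst y) = z1 then p (fst y) else 0) *
                       (if word_subst s (snd y) = z2 then q (snd y) else 0))"
    by (simp add: poly_subst_eq_sum[OF assms(1,3)] poly_subst_eq_sum[OF assms(2,4)]
        sum_product sum.cartesian_product split_def)
  also have "\<dots> = (\<Sum>y\<in>A \<times> B. if (word_subst s (fst y), word_subst s (snd y)) = (z1, z2)
                   then p (fst y) * q (snd y) else 0)"
    by (rule sum.cong) auto
  finally show ?thesis .
qed

text \<open>Both sides equal the sum of p u * q v over all pairs (u, v) with
  word_subst s u @ word_subst s v = w.\<close>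

lemma poly_subst_pmult:
  assumes "p \<in> FA" "q \<in> FA"
  shows "poly_subst s (pmult p q) = pmult (poly_subst s p) (poly_subst s q)"
proof
  fix w
  define A B where "A = supp p" and "B = supp q"
  have fin: "finite A" "finite B" using assms by (auto simp: A_def B_def finite_supp_FA)
  define M where "M = (\<lambda>x. fst x @ snd x) ` (A \<times> B)"
  define A' B' where "A' = word_subst s ` A" and "B' = word_subst s ` B"
  let ?pq = "\<lambda>y. p (fst y) * q (snd y)"
  let ?ws = "\<lambda>y. (word_subst s (fst y), word_subst s (snd y))"
  have pq: "pmult p q x = (\<Sum>y\<in>A \<times> B. if fst y @ snd y = x then ?pq y else 0)" for x
    by (rule pmult_eq_sum[OF fin]) (simp_all add: A_def B_def)
  have subst_pq: "poly_subst s p (fst z) * poly_subst s q (snd z) =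
      (\<Sum>y\<in>A \<times> B. if ?ws y = z then ?pq y else 0)" for z
    using poly_subst_mult_poly_subst[OF fin, of p q s "fst z" "snd z"] by (simp add: A_def B_def)
  have "poly_subst s (pmult p q) w = (\<Sum>x\<in>M. if word_subst s x = w then pmult p q x else 0)"
    by (rule poly_subst_eq_sum) (use supp_pmult[OF assms] fin in \<open>auto simp: M_def A_def B_def\<close>)
  also have "\<dots> = (\<Sum>x\<in>M. if word_subst s x = w then
      (\<Sum>y\<in>A \<times> B. if fst y @ snd y = x then ?pq y else 0) else 0)"
    by (simp only: pq)
  also have "\<dots> = (\<Sum>y\<in>A \<times> B. if word_subst s (fst y @ snd y) = w then ?pq y else 0)"
    by (rule sum_over_fibres) (use fin in \<open>auto simp: M_def\<close>)
  also have "\<dots> = (\<Sum>y\<in>A \<times> B. if fst (?ws y) @ snd (?ws y) = w then ?pq y else 0)"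
    by simp
  also have "\<dots> = (\<Sum>z\<in>A' \<times> B'. if fst z @ snd z = w then
      (\<Sum>y\<in>A \<times> B. if ?ws y = z then ?pq y else 0) else 0)"
    by (rule sum_over_fibres[symmetric]) (use fin in \<open>auto simp: A'_def B'_def\<close>)
  also have "\<dots> = (\<Sum>z\<in>A' \<times> B'.
      if fst z @ snd z = w then poly_subst s p (fst z) * poly_subst s q (snd z) else 0)"
    by (simp only: subst_pq)
  also have "\<dots> = pmult (poly_subst s p) (poly_subst s q) w"
    by (rule pmult_eq_sum[symmetric])
       (use fin supp_poly_subst in \<open>auto simp: A'_def B'_def A_def B_def\<close>)
  finally show "poly_subst s (pmult p q) w = pmult (poly_subst s p) (poly_subst s q) w" .
qed

lemma alg_endo_poly_subst:
  assumes "\<forall>i. s i \<noteq> []"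
  shows "alg_endo (poly_subst s :: (nat list \<Rightarrow> 'k::field) \<Rightarrow> _)"
  using assms
  by (simp add: alg_endo_def poly_subst_in_FA poly_subst_padd poly_subst_psmult poly_subst_pmult)

lemma sum_indicator_fibre_inj:
  assumes "inj_on g P" "finite P"
  shows "(\<Sum>x\<in>P. if g x = y then 1 else 0) = (if y \<in> g ` P then 1 else (0::'a::semiring_1))"
proof (cases "y \<in> g ` P")
  case True
  then obtain x0 where x0: "x0 \<in> P" "y = g x0" by blast
  then have "(\<Sum>x\<in>P. if g x = y then 1 else 0) = (\<Sum>x\<in>P. if x = x0 then 1 else (0::'a))"
    using assms(1) by (intro sum.cong) (auto dest: inj_onD)
  with True x0 assms(2) show ?thesis by simp
qed (force intro: sum.neutral)

lemma poly_subst_indicator: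
  assumes "inj_on (word_subst s) P" "finite P"
  shows "poly_subst s (\<lambda>u. if u \<in> P then 1 else 0) =
         (\<lambda>w. if w \<in> word_subst s ` P then 1 else (0::'k::field))"
proof
  fix w
  have "poly_subst s (\<lambda>u. if u \<in> P then 1 else (0::'k)) w =
        (\<Sum>u\<in>P. if word_subst s u = w then 1 else 0)"
    by (subst poly_subst_eq_sum[OF assms(2)]) (auto simp: supp_def intro: sum.cong)
  also have "\<dots> = (if w \<in> word_subst s ` P then 1 else 0)"
    using assms by (rule sum_indicator_fibre_inj)
  finally show "poly_subst s (\<lambda>u. if u \<in> P then 1 else 0) w =
      (if w \<in> word_subst s ` P then 1 else (0::'k))" .
qed

lemma sum_in_tspace:
  assumes "tspace V" "finite A" "\<forall>x\<in>A. f x \<in> V"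
  shows "(\<lambda>w. \<Sum>x\<in>A. f x w) \<in> V"
  using assms(2,3)
proof (induction A rule: finite_induct)
  case empty
  then show ?case using assms(1) by (simp add: tspace_def)
next
  case (insert x A)
  then have "(\<lambda>w. \<Sum>y\<in>insert x A. f y w) = padd (f x) (\<lambda>w. \<Sum>y\<in>A. f y w)"
    by (simp add: padd_def)
  with insert assms(1) show ?case by (simp add: tspace_def)
qed

lemma sum_endo_images_in_tspace_gen:
  assumes "finite A" "\<forall>x\<in>A. alg_endo (\<phi> x)" "p \<in> S"
  shows "(\<lambda>w. \<Sum>x\<in>A. \<phi> x p w) \<in> tspace_gen S"
  unfolding tspace_gen_def
proof
  fix V assume "V \<in> {V. tspace V \<and> S \<subseteq> V}"
  then have V: "tspace V" "p \<in> V" using assms(3) by auto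
  then have "\<forall>x\<in>A. \<phi> x p \<in> V" using assms(2) by (simp add: tspace_def)
  with V(1) assms(1) show "(\<lambda>w. \<Sum>x\<in>A. \<phi> x p w) \<in> V" by (rule sum_in_tspace)
qed

lemma mprod_map_Xv:
  "l \<noteq> [] \<Longrightarrow> mprod (map Xv l) = (\<lambda>w. if w = l then 1 else (0::'k::field))"
proof (induction l rule: induct_list012)
  case (2 x)
  then show ?case by (auto simp: Xv_def)
next
  case (3 x y l)
  show ?case
  proof
    fix w
    have "mprod (map Xv (x # y # l)) w = pmult (Xv x) (\<lambda>w. if w = y # l then 1 else (0::'k)) w"
      using 3 by simp
    also have "\<dots> = (\<Sum>z\<in>{[x]} \<times> {y # l}.
        if fst z @ snd z = w then Xv x (fst z) * (if snd z = y # l then 1 else (0::'k)) else 0)"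
      by (rule pmult_eq_sum) (auto simp: supp_def Xv_def)
    also have "\<dots> = (if w = x # y # l then 1 else 0)" by (auto simp: Xv_def)
    finally show "mprod (map Xv (x # y # l)) w = (if w = x # y # l then 1 else (0::'k))" .
  qed
qed simp

lemma bij_betw_permutes_permutations_of_set:
  "bij_betw (\<lambda>\<sigma>. map \<sigma> [0..<n]) {\<sigma>. \<sigma> permutes {0..<n}} (permutations_of_set {0..<n})"
proof -
  let ?f = "\<lambda>\<sigma>. map \<sigma> [0..<n]"
  have inj: "inj_on ?f {\<sigma>. \<sigma> permutes {0..<n}}"
  proof (rule inj_onI, rule ext)
    fix \<sigma> \<tau> i
    assume "\<sigma> \<in> {\<sigma>. \<sigma> permutes {0..<n}}" "\<tau> \<in> {\<sigma>. \<sigma> permutes {0..<n}}" "?f \<sigma> = ?f \<tau>"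
    then show "\<sigma> i = \<tau> i"
      by (cases "i < n") (auto simp: map_eq_conv permutes_not_in)
  qed
  have "?f ` {\<sigma>. \<sigma> permutes {0..<n}} \<subseteq> permutations_of_set {0..<n}"
  proof
    fix xs assume "xs \<in> ?f ` {\<sigma>. \<sigma> permutes {0..<n}}"
    then obtain \<sigma> where "\<sigma> permutes {0..<n}" "xs = map \<sigma> [0..<n]" by blast
    moreover have "[0..<n] \<in> permutations_of_set {0..<n}" by auto
    ultimately show "xs \<in> permutations_of_set {0..<n}"
      by (metis image_eqI permutations_of_set_image_permutes)
  qed
  moreover have "card (?f ` {\<sigma>. \<sigma> permutes {0..<n}}) = card (permutations_of_set {0..<n})"
    by (simp add: card_image[OF inj] card_permutations)
  ultimately show ?thesis
    using inj by (simp add: bij_betw_def card_subset_eq)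
qed

lemma symS_Xv:
  assumes "n \<ge> 1"
  shows "symS n Xv = (\<lambda>w. if w \<in> permutations_of_set {0..<n} then 1 else (0::'k::field))"
proof
  fix w
  let ?f = "\<lambda>\<sigma>. map \<sigma> [0..<n]"
  have bij: "bij_betw ?f {\<sigma>. \<sigma> permutes {0..<n}} (permutations_of_set {0..<n})"
    by (rule bij_betw_permutes_permutations_of_set)
  have "symS n Xv w = (\<Sum>\<sigma>\<in>{\<sigma>. \<sigma> permutes {0..<n}}. if ?f \<sigma> = w then 1 else (0::'k))"
    unfolding symS_def
  proof (intro sum.cong refl)
    fix \<sigma>
    have "map (\<lambda>i. Xv (\<sigma> i)) [0..<n] = map Xv (?f \<sigma>)" by simp
    moreover have "?f \<sigma> \<noteq> []" using assms by simp
    ultimately have "mprod (map (\<lambda>i. Xv (\<sigma> i)) [0..<n]) w = (if w = ?f \<sigma> then 1 else 0)"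
      by (metis mprod_map_Xv)
    then show "mprod (map (\<lambda>i. Xv (\<sigma> i)) [0..<n]) w = (if ?f \<sigma> = w then 1 else 0)"
      by auto
  qed
  also have "\<dots> = (if w \<in> ?f ` {\<sigma>. \<sigma> permutes {0..<n}} then 1 else 0)"
    by (rule sum_indicator_fibre_inj[OF bij_betw_imp_inj_on[OF bij] finite_permutations]) simp
  also have "\<dots> = (if w \<in> permutations_of_set {0..<n} then 1 else 0)"
    by (simp only: bij_betw_imp_surj_on[OF bij])
  finally show "symS n Xv w = (if w \<in> permutations_of_set {0..<n} then 1 else (0::'k))" .
qed

lemma append_Cons_in_permutations_of_set:
  "xs @ c # ys \<in> permutations_of_set A \<longleftrightarrow> c \<in> A \<and> xs @ ys \<in> permutations_of_set (A - {c})"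
  by (auto simp: permutations_of_set_def)

lemma append_adjacent_in_permutations_of_set:
  "xs @ a # b # ys \<in> permutations_of_set B \<longleftrightarrow>
     a \<in> B \<and> b \<in> B \<and> a \<noteq> b \<and> xs @ ys \<in> permutations_of_set (B - {a, b})"
proof -
  have "xs @ a # b # ys \<in> permutations_of_set B \<longleftrightarrow> a \<in> B \<and> xs @ b # ys \<in> permutations_of_set (B - {a})"
    by (rule append_Cons_in_permutations_of_set)
  also have "\<dots> \<longleftrightarrow> a \<in> B \<and> b \<in> B - {a} \<and> xs @ ys \<in> permutations_of_set (B - {a} - {b})"
    by (simp only: append_Cons_in_permutations_of_set)
  also have "B - {a} - {b} = B - {a, b}" by blast
  finally show ?thesis by blast
qed

definition pair_subst :: "nat \<Rightarrow> nat \<Rightarrow> nat \<Rightarrow> (nat \<Rightarrow> nat) \<Rightarrow> nat \<Rightarrow> nat list" where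
  "pair_subst c a b f i = (if i = c then [a, b] else [f i])"

lemma word_subst_pair_subst_map:
  "c \<notin> set u \<Longrightarrow> word_subst (pair_subst c a b f) u = map f u"
  by (induction u) (auto simp: word_subst_def pair_subst_def)

lemma word_subst_pair_subst_split:
  "c \<notin> set u1 \<Longrightarrow> c \<notin> set u2 \<Longrightarrow>
     word_subst (pair_subst c a b f) (u1 @ c # u2) = map f u1 @ a # b # map f u2"
  by (simp add: word_subst_pair_subst_map pair_subst_def)

context
  fixes A B :: "nat set" and a b c :: nat and f :: "nat \<Rightarrow> nat"
  assumes c: "c \<in> A" and ab: "a \<in> B" "b \<in> B" "a \<noteq> b"
    and f: "bij_betw f (A - {c}) (B - {a, b})"
begin

lemma permutations_of_set_map_bij:
  "map f ` permutations_of_set (A - {c}) = permutations_of_set (B - {a, b})"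
  using f by (metis bij_betw_def permutations_of_set_image_inj)

lemma permutation_split_at:
  assumes "u \<in> permutations_of_set A"
  obtains u1 u2 where "u = u1 @ c # u2" "u1 @ u2 \<in> permutations_of_set (A - {c})"
proof -
  have "c \<in> set u" using assms c by (simp add: permutations_of_set_def)
  then obtain u1 u2 where "u = u1 @ c # u2" by (meson split_list)
  with assms that show ?thesis by (simp add: append_Cons_in_permutations_of_set)
qed

lemma inj_on_word_subst_pair_subst:
  "inj_on (word_subst (pair_subst c a b f)) (permutations_of_set A)"
proof (rule inj_onI)
  fix u v
  assume "u \<in> permutations_of_set A" "v \<in> permutations_of_set A"
    and eq: "word_subst (pair_subst c a b f) u = word_subst (pair_subst c a b f) v"
  then obtain u1 u2 v1 v2 where
    u: "u = u1 @ c # u2" "u1 @ u2 \<in> permutations_of_set (A - {c})" and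
    v: "v = v1 @ c # v2" "v1 @ v2 \<in> permutations_of_set (A - {c})"
    by (metis permutation_split_at)
  have sets: "set u1 \<subseteq> A - {c}" "set u2 \<subseteq> A - {c}" "set v1 \<subseteq> A - {c}" "set v2 \<subseteq> A - {c}"
    using u(2) v(2) by (auto simp: permutations_of_set_def)
  then have "c \<notin> set u1" "c \<notin> set u2" "c \<notin> set v1" "c \<notin> set v2" by auto
  then have images: "map f u1 @ a # b # map f u2 = map f v1 @ a # b # map f v2"
    using eq unfolding u(1) v(1) by (metis word_subst_pair_subst_split)
  have "a \<notin> f ` (A - {c})" using f by (auto simp: bij_betw_def)
  then have "a \<notin> set (map f u1)" "a \<notin> set (b # map f u2)" using sets ab by auto
  then have "map f u1 = map f v1 \<and> b # map f u2 = b # map f v2"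
    using images append_Cons_eq_iff by metis
  then have "map f u1 = map f v1" "map f u2 = map f v2" by simp_all
  moreover have "inj_on f (A - {c})" using f by (rule bij_betw_imp_inj_on)
  ultimately have "u1 = v1" "u2 = v2" using sets
    by (metis inj_on_map_eq_map inj_on_subset le_sup_iff)+
  then show "u = v" by (simp add: u(1) v(1))
qed

lemma image_word_subst_pair_subst:
  "word_subst (pair_subst c a b f) ` permutations_of_set A =
     {w \<in> permutations_of_set B. sublist [a, b] w}"
proof (intro subset_antisym subsetI)
  fix w assume "w \<in> word_subst (pair_subst c a b f) ` permutations_of_set A"
  then obtain u1 u2 where w: "w = word_subst (pair_subst c a b f) (u1 @ c # u2)"
    and u: "u1 @ u2 \<in> permutations_of_set (A - {c})"
    by (metis imageE permutation_split_at)
  then have "c \<notin> set u1" "c \<notin> set u2" by (auto simp: permutations_of_set_def)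
  then have "w = map f u1 @ a # b # map f u2" unfolding w by (rule word_subst_pair_subst_split)
  moreover have "map f u1 @ map f u2 \<in> permutations_of_set (B - {a, b})"
    using u permutations_of_set_map_bij by (metis image_eqI map_append)
  ultimately show "w \<in> {w \<in> permutations_of_set B. sublist [a, b] w}"
    using ab by (simp add: append_adjacent_in_permutations_of_set sublist_def) blast
next
  fix w assume "w \<in> {w \<in> permutations_of_set B. sublist [a, b] w}"
  then obtain w1 w2 where w: "w = w1 @ a # b # w2" "w1 @ w2 \<in> permutations_of_set (B - {a, b})"
    by (auto simp: sublist_def append_adjacent_in_permutations_of_set)
  then obtain v where v: "v \<in> permutations_of_set (A - {c})" "map f v = w1 @ w2"
    using permutations_of_set_map_bij by (metis imageE)
  then obtain v1 v2 where "v = v1 @ v2" "map f v1 = w1" "map f v2 = w2"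
    by (auto simp: map_eq_append_conv)
  moreover have "c \<notin> set v" using v(1) by (auto simp: permutations_of_set_def)
  ultimately have "word_subst (pair_subst c a b f) (v1 @ c # v2) = w"
    unfolding w(1) by (metis Un_iff set_append word_subst_pair_subst_split)
  moreover have "v1 @ c # v2 \<in> permutations_of_set A"
    using c v(1) \<open>v = v1 @ v2\<close> by (simp add: append_Cons_in_permutations_of_set)
  ultimately show "w \<in> word_subst (pair_subst c a b f) ` permutations_of_set A" by blast
qed

end

lemma alg_endo_maps_symS_to_adjacent:
  fixes a b d :: nat
  assumes "d \<ge> 1" "a < Suc d" "b < Suc d" "a \<noteq> b"
  shows "\<exists>\<phi>. alg_endo \<phi> \<and> \<phi> (symS d Xv) =
    (\<lambda>w. if w \<in> permutations_of_set {0..<Suc d} \<and> sublist [a, b] w then 1 else (0::'k::field))"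
proof -
  have "card ({0..<d} - {d - 1}) = card ({0..<Suc d} - {a, b})"
    using assms by (simp add: card_Diff_subset)
  then obtain f where f: "bij_betw f ({0..<d} - {d - 1}) ({0..<Suc d} - {a, b})"
    by (metis finite_same_card_bij finite_Diff finite_atLeastLessThan)
  let ?s = "pair_subst (d - 1) a b f"
  have c: "d - 1 \<in> {0..<d}" using assms by simp
  have endo: "alg_endo (poly_subst ?s :: (nat list \<Rightarrow> 'k) \<Rightarrow> _)"
    by (rule alg_endo_poly_subst) (simp add: pair_subst_def)
  have inj: "inj_on (word_subst ?s) (permutations_of_set {0..<d})"
    by (rule inj_on_word_subst_pair_subst[OF c _ _ _ f]) (use assms in auto)
  have img: "word_subst ?s ` permutations_of_set {0..<d} =
      {w \<in> permutations_of_set {0..<Suc d}. sublist [a, b] w}"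
    by (rule image_word_subst_pair_subst[OF c _ _ _ f]) (use assms in auto)
  have "poly_subst ?s (symS d Xv) =
      poly_subst ?s (\<lambda>u. if u \<in> permutations_of_set {0..<d} then 1 else (0::'k))"
    by (simp only: symS_Xv[OF assms(1)])
  also have "\<dots> = (\<lambda>w. if w \<in> word_subst ?s ` permutations_of_set {0..<d} then 1 else 0)"
    by (rule poly_subst_indicator[OF inj]) simp
  also have "\<dots> =
      (\<lambda>w. if w \<in> permutations_of_set {0..<Suc d} \<and> sublist [a, b] w then 1 else (0::'k))"
    by (simp only: img mem_Collect_eq)
  finally show ?thesis using endo by blast
qed

lemma sublist_pair_iff_in_zip_tl: "sublist [a, b] w \<longleftrightarrow> (a, b) \<in> set (zip w (tl w))"
proof (induction w rule: induct_list012)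
  case (3 x y w)
  then show ?case by (auto simp: sublist_Cons_right)
qed (auto simp: sublist_Cons_right)

lemma card_set_zip_tl: "distinct w \<Longrightarrow> card (set (zip w (tl w))) = length w - 1"
  by (simp add: distinct_card distinct_zipI1)

definition distinct_pairs :: "nat \<Rightarrow> (nat \<times> nat) set" where
  "distinct_pairs n = {p. fst p < n \<and> snd p < n \<and> fst p \<noteq> snd p}"

lemma finite_distinct_pairs: "finite (distinct_pairs n)"
  by (rule finite_subset[of _ "{0..<n} \<times> {0..<n}"]) (auto simp: distinct_pairs_def)

lemma sum_adjacent_pairs:
  assumes "w \<in> permutations_of_set {0..<n}"
  shows "(\<Sum>p\<in>distinct_pairs n. if sublist [fst p, snd p] w then 1 else 0) =
         (of_nat (n - 1) :: 'a::semiring_1)"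
proof -
  have w: "distinct w" "set w = {0..<n}" "length w = n"
    using assms by (auto simp: permutations_of_set_def length_finite_permutations_of_set)
  have "{p \<in> distinct_pairs n. sublist [fst p, snd p] w} = set (zip w (tl w))"
  proof -
    have "x \<noteq> y" if "(x, y) \<in> set (zip w (tl w))" for x y
      using that w(1) by (auto simp: set_zip nth_tl nth_eq_iff_index_eq)
    moreover have "x \<in> set w \<and> y \<in> set w" if "(x, y) \<in> set (zip w (tl w))" for x y
      using that by (cases w) (auto dest: set_zip_leftD set_zip_rightD)
    ultimately show ?thesis
      using w(2) by (auto simp: distinct_pairs_def sublist_pair_iff_in_zip_tl)
  qed
  then show ?thesis
    using w by (simp add: sum.inter_filter[OF finite_distinct_pairs, symmetric] card_set_zip_tl)
qed

lemma psmult_symS_Suc_eq_sum_adjacent: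
  "psmult (of_nat d) (symS (Suc d) Xv) =
     (\<lambda>w. \<Sum>p\<in>distinct_pairs (Suc d).
        if w \<in> permutations_of_set {0..<Suc d} \<and> sublist [fst p, snd p] w then 1 else (0::'k::field))"
proof
  fix w
  show "psmult (of_nat d) (symS (Suc d) Xv) w = (\<Sum>p\<in>distinct_pairs (Suc d).
      if w \<in> permutations_of_set {0..<Suc d} \<and> sublist [fst p, snd p] w then 1 else (0::'k))"
    by (cases "w \<in> permutations_of_set {0..<Suc d}")
       (simp_all add: psmult_def symS_Xv sum_adjacent_pairs)
qed

theorem corollary2p3:
  fixes d :: nat
  assumes "d \<ge> 1"
  shows "psmult (of_nat d) (symS (Suc d) (Xv :: nat \<Rightarrow> nat list \<Rightarrow> 'k::field))
           \<in> tspace_gen {symS d (Xv :: nat \<Rightarrow> nat list \<Rightarrow> 'k)}"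
proof -
  let ?adjacent = "\<lambda>p w. if w \<in> permutations_of_set {0..<Suc d} \<and> sublist [fst p, snd p] w
                         then 1 else (0::'k)"
  have "\<forall>p\<in>distinct_pairs (Suc d). \<exists>\<phi>. alg_endo \<phi> \<and> \<phi> (symS d Xv) = ?adjacent p"
    using alg_endo_maps_symS_to_adjacent[OF assms] by (auto simp: distinct_pairs_def)
  then obtain \<phi> where
    \<phi>: "\<forall>p\<in>distinct_pairs (Suc d). alg_endo (\<phi> p) \<and> \<phi> p (symS d Xv) = ?adjacent p"
    by (rule bchoice[elim_format]) blast
  then have "psmult (of_nat d) (symS (Suc d) Xv) =
      (\<lambda>w. \<Sum>p\<in>distinct_pairs (Suc d). \<phi> p (symS d Xv) w)"
    by (auto simp: psmult_symS_Suc_eq_sum_adjacent intro!: sum.cong)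
  also have "\<dots> \<in> tspace_gen {symS d Xv}"
    by (intro sum_endo_images_in_tspace_gen finite_distinct_pairs) (use \<phi> in auto)
  finally show ?thesis .
qed

end
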